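(* Let $V$ be a graded generalized Eulerian $A_n(K)$-module and let $1\le r\le n$. Then: (1) for all $\nu\ge0$, $H^\nu(\partial_r,\partial_{r+1},\dots,\partial_n;V)(-n+r-1)$ is a generalized Eulerian $A_{r-1}(K)$-module; (2) for all $\nu\ge0$, $H^\nu(X_r,\dots,X_n;V)$ is a generalized Eulerian $A_{r-1}(K)$-module; (3) for all $\nu\ge0$, $H^\nu(X_1,\dots,X_{r-1},\partial_r,\partial_{r+1},\dots,\partial_n;V)$ is a graded $K$-vector space concentrated in degree $-n+r-1$.
   Context: Let $K$ be a field of characteristic zero, $R=K[X_1,\dots,X_n]$ with standard grading. $A_n(K)=K\langle X_1,\dots,X_n,\partial_1,\dots,\partial_n\rangle$ is the $n$-th Weyl algebra ($\partial_iX_j-X_j\partial_i=\delta_{ij}$), graded by $\deg X_i=1$, $\deg\partial_i=-1$. The Euler operator is $\mathcal E_n=\sum_{i=1}^nX_i\partial_i$; $|z|$ denotes the degree of a homogeneous $z$. A graded left $A_n(K)$-module $M$ is generalized Eulerian if for every homogeneous $z\in M$ there is $a\ge1$ with $(\mathcal E_n-|z|)^az=0$. For $m\le n$, $A_m(K)=K\langle X_1,\dots,X_m,\partial_1,\dots,\partial_m\rangle\subseteq A_n(K)$ with Euler operator $\mathcal E_m=\sum_{i\le m}X_i\partial_i$, and "generalized Eulerian $A_m(K)$-module" is defined with $\mathcal E_m$; for $m=0$, $A_0(K)=K$, $\mathcal E_0=0$, and a graded vector space is generalized Eulerian iff it is concentrated in degree $0$. $M(l)_j=M_{j+l}$. Koszul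 (co)homology: for pairwise commuting homogeneous $u_1,\dots,u_\ell\in A_n(K)$ and a graded left $A_n(K)$-module $V$, the Koszul complex has $K_p=\bigoplus_{i_1<\dots<i_p}V(-(\deg u_{i_1}+\dots+\deg u_{i_p}))$ with the usual Koszul differentials (left multiplication by the $u_i$ with signs), homogeneous of degree $0$, so $H_0(u;V)=V/\sum u_iV$ with the grading of $V$. $H_p(u_1,\dots,u_\ell;V)$ denotes its homology and $H^\nu(u_1,\dots,u_\ell;V):=H_{\ell-\nu}(u_1,\dots,u_\ell;V)$. Elements of $A_n(K)$ commuting with all $u_i$ act on these; in particular $H^\nu(\partial_r,\dots,\partial_n;V)$ and $H^\nu(X_r,\dots,X_n;V)$ are graded $A_{r-1}(K)$-modules. *)

theory Defs
  imports Complex_Main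
begin

text \<open>A left module over the n-th Weyl algebra A_n(K), given by its generators:
  a K-vector space (scalar multiplication scale) with K-linear operators
  X i, D i (i = 1..n) satisfying the defining relations of A_n(K).\<close>
definition weyl_module ::
  "('k::field \<Rightarrow> 'v::ab_group_add \<Rightarrow> 'v) \<Rightarrow> nat \<Rightarrow> (nat \<Rightarrow> 'v \<Rightarrow> 'v) \<Rightarrow> (nat \<Rightarrow> 'v \<Rightarrow> 'v) \<Rightarrow> bool" where
  "weyl_module scale n X D \<longleftrightarrow>
     Vector_Spaces.vector_space scale \<and>
     (\<forall>i\<in>{1..n}. Vector_Spaces.linear scale scale (X i) \<and> Vector_Spaces.linear scale scale (D i)) \<and>
     (\<forall>i\<in>{1..n}. \<forall>j\<in>{1..n}. \<forall>v.
        X i (X j v) = X j (X i v) \<and> D i (D j v) = D j (D i v) \<and>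
        D i (X j v) - X j (D i v) = (if i = j then v else 0))"

definition graded_weyl_module ::
  "('k::field \<Rightarrow> 'v::ab_group_add \<Rightarrow> 'v) \<Rightarrow> nat \<Rightarrow> (nat \<Rightarrow> 'v \<Rightarrow> 'v) \<Rightarrow> (nat \<Rightarrow> 'v \<Rightarrow> 'v)
     \<Rightarrow> (int \<Rightarrow> 'v set) \<Rightarrow> bool" where
  "graded_weyl_module scale n X D G \<longleftrightarrow>
     weyl_module scale n X D \<and>
     (\<forall>j. module.subspace scale (G j)) \<and>
     (\<forall>v. \<exists>!c :: int \<Rightarrow> 'v. finite {j. c j \<noteq> 0} \<and> (\<forall>j. c j \<in> G j) \<and> v = (\<Sum>j\<in>{j. c j \<noteq> 0}. c j)) \<and>
     (\<forall>i\<in>{1..n}. \<forall>j. \<forall>v\<in>G j. X i v \<in> G (j + 1) \<and> D i v \<in> G (j - 1))"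

definition euler :: "(nat \<Rightarrow> 'v \<Rightarrow> 'v) \<Rightarrow> (nat \<Rightarrow> 'v \<Rightarrow> 'v) \<Rightarrow> nat \<Rightarrow> 'v \<Rightarrow> 'v::comm_monoid_add" where
  "euler X D m v = (\<Sum>i=1..m. X i (D i v))"

definition gen_eulerian ::
  "('k::field \<Rightarrow> 'v::ab_group_add \<Rightarrow> 'v) \<Rightarrow> nat \<Rightarrow> (nat \<Rightarrow> 'v \<Rightarrow> 'v) \<Rightarrow> (nat \<Rightarrow> 'v \<Rightarrow> 'v)
     \<Rightarrow> (int \<Rightarrow> 'v set) \<Rightarrow> bool" where
  "gen_eulerian scale n X D G \<longleftrightarrow>
     (\<forall>j. \<forall>z\<in>G j. \<exists>a\<ge>1. ((\<lambda>v. euler X D n v - scale (of_int j) v) ^^ a) z = 0)"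

text \<open>Koszul complex of commuting operators u 0, ..., u (l-1) on V:
  K_p = direct sum over subsets S of {0..<l} with card S = p of copies of V,
  an element being a function from index sets to V supported on such S.\<close>
definition koszul_chains :: "nat \<Rightarrow> int \<Rightarrow> (nat set \<Rightarrow> 'v::zero) set" where
  "koszul_chains l p = {c. \<forall>S. c S \<noteq> 0 \<longrightarrow> S \<subseteq> {..<l} \<and> int (card S) = p}"

text \<open>Koszul differential: d(v e_S) = sum_k (-1)^(k-1) (u_{i_k} v) e_{S - {i_k}}.\<close>
definition koszul_diff :: "nat \<Rightarrow> (nat \<Rightarrow> 'v \<Rightarrow> 'v::ab_group_add) \<Rightarrow> (nat set \<Rightarrow> 'v) \<Rightarrow> nat set \<Rightarrow> 'v" where
  "koszul_diff l u c T =
     (if T \<subseteq> {..<l} then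
        (\<Sum>i\<in>{..<l} - T. (if even (card {t\<in>T. t < i}) then u i (c (insert i T))
                                                         else - u i (c (insert i T))))
      else 0)"

text \<open>Homogeneity of degree d in K_p: the S-component lies in V(-sum_{i in S} deg u_i)_d.\<close>
definition koszul_homog :: "(int \<Rightarrow> 'v set) \<Rightarrow> (nat \<Rightarrow> int) \<Rightarrow> int \<Rightarrow> (nat set \<Rightarrow> 'v) \<Rightarrow> bool" where
  "koszul_homog G dg d c \<longleftrightarrow> (\<forall>S. c S \<in> G (d - (\<Sum>i\<in>S. dg i)))"

definition koszul_cycle :: "nat \<Rightarrow> (nat \<Rightarrow> 'v \<Rightarrow> 'v::ab_group_add) \<Rightarrow> int \<Rightarrow> (nat set \<Rightarrow> 'v) \<Rightarrow> bool" where
  "koszul_cycle l u p c \<longleftrightarrow> c \<in> koszul_chains l p \<and> koszul_diff l u c = (\<lambda>T. 0)"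

definition koszul_boundary :: "nat \<Rightarrow> (nat \<Rightarrow> 'v \<Rightarrow> 'v::ab_group_add) \<Rightarrow> int \<Rightarrow> (nat set \<Rightarrow> 'v) \<Rightarrow> bool" where
  "koszul_boundary l u p c \<longleftrightarrow> (\<exists>b\<in>koszul_chains l (p + 1). c = koszul_diff l u b)"

text \<open>H^nu(u_0,...,u_(l-1); V)(tw) = H_(l-nu)(...)(tw) is a generalized Eulerian
  A_m(K)-module: every homogeneous class, i.e. the class of a homogeneous cycle of
  degree d (degree d - tw after the twist), is killed by a power of E_m - (d - tw),
  E_m acting componentwise.\<close>
definition koszul_coh_gen_eulerian ::
  "('k::field \<Rightarrow> 'v::ab_group_add \<Rightarrow> 'v) \<Rightarrow> nat \<Rightarrow> (nat \<Rightarrow> 'v \<Rightarrow> 'v) \<Rightarrow> (nat \<Rightarrow> 'v \<Rightarrow> 'v)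
     \<Rightarrow> (int \<Rightarrow> 'v set) \<Rightarrow> nat \<Rightarrow> (nat \<Rightarrow> 'v \<Rightarrow> 'v) \<Rightarrow> (nat \<Rightarrow> int) \<Rightarrow> nat \<Rightarrow> int \<Rightarrow> bool" where
  "koszul_coh_gen_eulerian scale m X D G l u dg \<nu> tw \<longleftrightarrow>
     (\<forall>d c. koszul_cycle l u (int l - int \<nu>) c \<and> koszul_homog G dg d c \<longrightarrow>
        (\<exists>a\<ge>1. koszul_boundary l u (int l - int \<nu>)
                 (((\<lambda>c S. euler X D m (c S) - scale (of_int (d - tw)) (c S)) ^^ a) c)))"

definition koszul_coh_concentrated ::
  "(int \<Rightarrow> 'v::ab_group_add set) \<Rightarrow> nat \<Rightarrow> (nat \<Rightarrow> 'v \<Rightarrow> 'v) \<Rightarrow> (nat \<Rightarrow> int) \<Rightarrow> nat \<Rightarrow> int \<Rightarrow> bool" where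
  "koszul_coh_concentrated G l u dg \<nu> e \<longleftrightarrow>
     (\<forall>d c. koszul_cycle l u (int l - int \<nu>) c \<and> koszul_homog G dg d c \<and> d \<noteq> e \<longrightarrow>
        koszul_boundary l u (int l - int \<nu>) c)"

end

theory Submission
  imports Defs
begin

text \<open>
  Let the Koszul operators be u_i \<in> {X_j, \<partial>_j} and let w_i be the dual operator
  (\<partial>_j for X_j and X_j for \<partial>_j). Contraction with the w_i is a homotopy s with
  ds + sd = E' + \<theta> + deg S on the S-component, where E' = \<Sum> X_j \<partial>_j is summed over the
  variables of the u_i and \<theta> is the number of \<partial>'s among them. For a homogeneous cycle c
  of degree d the S-component has degree d - deg S, so E_n - (d - deg S), applied
  componentwise, is a chain map that is nilpotent on c. If E_n = E_m + E', then on cycles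
  E_m - (d + \<theta>) agrees with it modulo the boundary d(s c), hence a power of E_m - (d + \<theta>)
  maps c to a boundary; this gives (1) and (2). If the u_i involve all n variables, take
  m = 0: then E_0 - (d + \<theta>) is a scalar, invertible in characteristic 0 unless d = -\<theta>,
  which gives (3).
\<close>

section \<open>Koszul complexes of commuting additive operators\<close>

definition signed :: "bool \<Rightarrow> 'v::ab_group_add \<Rightarrow> 'v" where
  "signed b v = (if b then v else - v)"

lemma signed_signed: "signed a (signed b v) = signed (a = b) v"
  by (auto simp: signed_def)

lemma signed_add: "signed b (x + y) = signed b x + signed b y"
  by (auto simp: signed_def)

lemma signed_sum: "signed b (sum f A) = (\<Sum>x\<in>A. signed b (f x))"
  by (auto simp: signed_def sum_negf)

lemma signed_True [simp]: "signed True v = v"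
  by (simp add: signed_def)

lemma additive_signed: "additive f \<Longrightarrow> f (signed b v) = signed b (f v)"
  by (simp add: signed_def additive.minus)

definition koszul_sign :: "nat set \<Rightarrow> nat \<Rightarrow> bool" where
  "koszul_sign T i \<longleftrightarrow> even (card {j\<in>T. j < i})"

lemma koszul_sign_remove:
  assumes "finite T" "j \<in> T"
  shows "koszul_sign T i \<longleftrightarrow> (koszul_sign (T - {j}) i \<longleftrightarrow> \<not> j < i)"
proof (cases "j < i")
  case True
  have "{x\<in>T. x < i} = insert j {x\<in>T - {j}. x < i}" using True assms by auto
  moreover have "card (insert j {x\<in>T - {j}. x < i}) = Suc (card {x\<in>T - {j}. x < i})"
    using assms by (intro card_insert_disjoint) auto
  ultimately show ?thesis using True by (simp add: koszul_sign_def)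
next
  case False
  then have "{x\<in>T. x < i} = {x\<in>T - {j}. x < i}" by auto
  then show ?thesis using False by (simp add: koszul_sign_def)
qed

lemma koszul_sign_insert:
  "finite T \<Longrightarrow> i \<notin> T \<Longrightarrow> koszul_sign (insert i T) j \<longleftrightarrow> (koszul_sign T j \<longleftrightarrow> \<not> i < j)"
  using koszul_sign_remove[of "insert i T" i j] by simp

lemma koszul_sign_insert_self: "koszul_sign (insert i T) i = koszul_sign T i"
  and koszul_sign_remove_self: "koszul_sign (T - {i}) i = koszul_sign T i"
  unfolding koszul_sign_def by (auto intro!: arg_cong[where f = "\<lambda>A. even (card A)"])

lemma koszul_diff_eq:
  "koszul_diff l u c T =
     (if T \<subseteq> {..<l} then (\<Sum>i\<in>{..<l} - T. signed (koszul_sign T i) (u i (c (insert i T)))) else 0)"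
  unfolding koszul_diff_def signed_def koszul_sign_def by simp

definition koszul_homotopy ::
  "nat \<Rightarrow> (nat \<Rightarrow> 'v \<Rightarrow> 'v) \<Rightarrow> (nat set \<Rightarrow> 'v) \<Rightarrow> nat set \<Rightarrow> 'v::ab_group_add" where
  "koszul_homotopy l w c T =
     (if T \<subseteq> {..<l} then (\<Sum>j\<in>T. signed (koszul_sign T j) (w j (c (T - {j})))) else 0)"

definition componentwise :: "(nat set \<Rightarrow> 'v \<Rightarrow> 'v) \<Rightarrow> (nat set \<Rightarrow> 'v) \<Rightarrow> nat set \<Rightarrow> 'v" where
  "componentwise h c = (\<lambda>S. h S (c S))"

definition koszul_endo ::
  "nat \<Rightarrow> (nat \<Rightarrow> 'v \<Rightarrow> 'v) \<Rightarrow> (nat set \<Rightarrow> 'v \<Rightarrow> 'v::ab_group_add) \<Rightarrow> bool" where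
  "koszul_endo l u h \<longleftrightarrow> (\<forall>S. additive (h S)) \<and>
     (\<forall>T i v. T \<subseteq> {..<l} \<longrightarrow> i < l \<longrightarrow> i \<notin> T \<longrightarrow> u i (h (insert i T) v) = h T (u i v))"

lemma koszul_endo_additive: "koszul_endo l u h \<Longrightarrow> additive (h S)"
  by (simp add: koszul_endo_def)

lemma componentwise_funpow: "(componentwise h ^^ a) c = componentwise (\<lambda>S. h S ^^ a) c"
  by (induction a) (auto simp: componentwise_def)

lemma additive_funpow: "additive (f :: 'v::ab_group_add \<Rightarrow> 'v) \<Longrightarrow> additive (f ^^ a)"
  by (induction a) (auto simp: additive_def)

lemma componentwise_funpow_diff:
  assumes "\<And>S. additive (h S)"
  shows "(componentwise h ^^ a) (\<lambda>S. x S - y S) =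
    (\<lambda>S. (componentwise h ^^ a) x S - (componentwise h ^^ a) y S)"
  by (simp add: componentwise_funpow componentwise_def additive.diff[OF additive_funpow[OF assms]])

lemma funpow_eq_0_mono:
  fixes f :: "'v::zero \<Rightarrow> 'v"
  assumes "f 0 = 0" "(f ^^ a) x = 0" "a \<le> b"
  shows "(f ^^ b) x = 0"
proof -
  have "(f ^^ q) 0 = 0" for q by (induction q) (simp_all add: assms(1))
  moreover have "(f ^^ b) x = (f ^^ (b - a)) ((f ^^ a) x)"
    using assms(3) by (simp flip: funpow_add[unfolded comp_def, THEN fun_cong])
  ultimately show ?thesis using assms(2) by simp
qed

lemma componentwise_nilpotent:
  fixes h :: "nat set \<Rightarrow> 'v::zero \<Rightarrow> 'v"
  assumes zero: "\<And>S. h S 0 = 0" and "finite A" and outside: "\<And>S. S \<notin> A \<Longrightarrow> c S = 0"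
    and nil: "\<And>S. S \<in> A \<Longrightarrow> \<exists>a. (h S ^^ a) (c S) = 0"
  shows "\<exists>a\<ge>1. (componentwise h ^^ a) c = (\<lambda>S. 0)"
proof -
  obtain e where e: "\<And>S. S \<in> A \<Longrightarrow> (h S ^^ e S) (c S) = 0" using nil by metis
  define a where "a = Suc (\<Sum>S\<in>A. e S)"
  have "(h S ^^ a) (c S) = 0" for S
  proof (cases "S \<in> A")
    case True
    then have "e S \<le> a" unfolding a_def using \<open>finite A\<close> by (simp add: le_SucI member_le_sum)
    then show ?thesis using funpow_eq_0_mono[of "h S", OF zero e[OF True]] by blast
  next
    case False
    then show ?thesis using funpow_eq_0_mono[of "h S" 0, OF zero] outside by simp
  qed
  then show ?thesis by (intro exI[of _ a]) (simp add: a_def componentwise_funpow componentwise_def)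
qed

lemma koszul_chains_vanish: "c \<in> koszul_chains l p \<Longrightarrow> \<not> S \<subseteq> {..<l} \<Longrightarrow> c S = 0"
  by (auto simp: koszul_chains_def)

lemma koszul_chains_zero: "(\<lambda>S. 0) \<in> koszul_chains l p"
  by (simp add: koszul_chains_def)

lemma koszul_chains_add:
  fixes a b :: "nat set \<Rightarrow> 'v::monoid_add"
  assumes "a \<in> koszul_chains l p" "b \<in> koszul_chains l p"
  shows "(\<lambda>S. a S + b S) \<in> koszul_chains l p"
  unfolding koszul_chains_def mem_Collect_eq
proof (intro allI impI)
  fix S assume "a S + b S \<noteq> 0"
  then have "a S \<noteq> 0 \<or> b S \<noteq> 0" by auto
  then show "S \<subseteq> {..<l} \<and> int (card S) = p" using assms by (auto simp: koszul_chains_def)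
qed

lemma koszul_chains_componentwise:
  "(\<And>S. h S 0 = 0) \<Longrightarrow> c \<in> koszul_chains l p \<Longrightarrow> componentwise h c \<in> koszul_chains l p"
proof -
  assume zero: "\<And>S. h S 0 = 0" and c: "c \<in> koszul_chains l p"
  have "h S (c S) \<noteq> 0 \<Longrightarrow> c S \<noteq> 0" for S using zero by metis
  then show ?thesis using c by (auto simp: koszul_chains_def componentwise_def)
qed

lemma koszul_homotopy_in_chains:
  assumes w: "\<And>j. j < l \<Longrightarrow> w j 0 = 0" and c: "c \<in> koszul_chains l p"
  shows "koszul_homotopy l w c \<in> koszul_chains l (p + 1)"
  unfolding koszul_chains_def
proof (intro CollectI allI impI)
  fix S assume ne: "koszul_homotopy l w c S \<noteq> 0"
  then have S: "S \<subseteq> {..<l}" by (auto simp: koszul_homotopy_def split: if_splits)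
  with ne obtain j where j: "j \<in> S" "signed (koszul_sign S j) (w j (c (S - {j}))) \<noteq> 0"
    by (auto simp: koszul_homotopy_def dest: sum.not_neutral_contains_not_neutral)
  moreover have "j < l" using S j(1) by auto
  ultimately have "c (S - {j}) \<noteq> 0" using w[of j] by (metis signed_def minus_zero)
  then have "int (card (S - {j})) = p" using c by (auto simp: koszul_chains_def)
  moreover have "card S = Suc (card (S - {j}))"
    using card_Suc_Diff1[OF finite_subset[OF S] j(1)] by simp
  ultimately show "S \<subseteq> {..<l} \<and> int (card S) = p + 1" using S by simp
qed

lemma koszul_diff_componentwise:
  assumes "koszul_endo l u h"
  shows "koszul_diff l u (componentwise h c) = componentwise h (koszul_diff l u c)"
proof
  fix T
  have add: "additive (h T)" using assms by (rule koszul_endo_additive)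
  show "koszul_diff l u (componentwise h c) T = componentwise h (koszul_diff l u c) T"
    using assms
    by (auto simp: koszul_diff_eq componentwise_def koszul_endo_def additive.sum[OF add]
          additive_signed[OF add] additive.zero[OF add] intro!: sum.cong)
qed

locale koszul_complex =
  fixes l :: nat and u :: "nat \<Rightarrow> 'v::ab_group_add \<Rightarrow> 'v"
  assumes additive_u: "i < l \<Longrightarrow> additive (u i)"
begin

lemma koszul_diff_zero: "koszul_diff l u (\<lambda>S. 0) = (\<lambda>T. 0)"
  by (rule ext)
    (auto simp: koszul_diff_eq signed_def additive.zero[OF additive_u] intro!: sum.neutral)

lemma koszul_diff_add:
  "koszul_diff l u (\<lambda>S. a S + b S) = (\<lambda>T. koszul_diff l u a T + koszul_diff l u b T)"
  by (auto simp: koszul_diff_eq additive.add[OF additive_u] signed_add sum.distrib[symmetric]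
        intro!: sum.cong)

lemma koszul_boundary_zero: "koszul_boundary l u p (\<lambda>S. 0)"
  unfolding koszul_boundary_def using koszul_chains_zero koszul_diff_zero by metis

lemma koszul_boundary_add:
  assumes "koszul_boundary l u p a" "koszul_boundary l u p b"
  shows "koszul_boundary l u p (\<lambda>S. a S + b S)"
proof -
  obtain x y where "x \<in> koszul_chains l (p + 1)" "a = koszul_diff l u x"
    "y \<in> koszul_chains l (p + 1)" "b = koszul_diff l u y"
    using assms by (auto simp: koszul_boundary_def)
  then show ?thesis
    unfolding koszul_boundary_def
    by (intro bexI[of _ "\<lambda>S. x S + y S"]) (simp_all add: koszul_diff_add koszul_chains_add)
qed

lemma koszul_boundary_componentwise:
  assumes "koszul_endo l u h" "koszul_boundary l u p c"
  shows "koszul_boundary l u p (componentwise h c)"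
proof -
  obtain b where "b \<in> koszul_chains l (p + 1)" "c = koszul_diff l u b"
    using assms(2) by (auto simp: koszul_boundary_def)
  moreover have "componentwise h b \<in> koszul_chains l (p + 1)" if "b \<in> koszul_chains l (p + 1)"
    using that additive.zero[OF koszul_endo_additive[OF assms(1)]]
    by (rule koszul_chains_componentwise[rotated])
  ultimately show ?thesis
    unfolding koszul_boundary_def using koszul_diff_componentwise[OF assms(1)] by metis
qed

lemma koszul_boundary_uminus:
  assumes "koszul_boundary l u p c"
  shows "koszul_boundary l u p (\<lambda>S. - c S)"
proof -
  have "koszul_endo l u (\<lambda>S. uminus)"
    by (simp add: koszul_endo_def additive_def additive.minus[OF additive_u])
  from koszul_boundary_componentwise[OF this assms] show ?thesis by (simp add: componentwise_def)
qed

lemma koszul_boundary_funpow_componentwise: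
  "koszul_endo l u h \<Longrightarrow> koszul_boundary l u p c \<Longrightarrow>
    koszul_boundary l u p ((componentwise h ^^ a) c)"
  by (induction a) (simp_all add: koszul_boundary_componentwise)

lemma koszul_cycle_componentwise:
  assumes "koszul_endo l u h" "koszul_cycle l u p c"
  shows "koszul_cycle l u p (componentwise h c)"
proof -
  have zero: "h S 0 = 0" for S using additive.zero[OF koszul_endo_additive[OF assms(1)]] .
  then have "koszul_diff l u (componentwise h c) = (\<lambda>T. 0)"
    using assms(2) unfolding koszul_diff_componentwise[OF assms(1)]
    by (simp add: koszul_cycle_def componentwise_def)
  then show ?thesis
    using assms(2) zero by (simp add: koszul_cycle_def koszul_chains_componentwise)
qed

lemma koszul_boundary_funpow_diff:
  assumes f: "koszul_endo l u f" and g: "koszul_endo l u g"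
    and congr: "\<And>c. koszul_cycle l u p c \<Longrightarrow>
                  koszul_boundary l u p (\<lambda>S. componentwise f c S - componentwise g c S)"
  shows "koszul_cycle l u p c \<Longrightarrow>
    koszul_boundary l u p (\<lambda>S. (componentwise f ^^ q) c S - (componentwise g ^^ q) c S)"
proof (induction q arbitrary: c)
  case 0
  then show ?case using koszul_boundary_zero by simp
next
  case (Suc q)
  let ?F = "componentwise f" and ?G = "componentwise g"
  have "koszul_boundary l u p ((?F ^^ q) (\<lambda>S. ?F c S - ?G c S))"
    by (rule koszul_boundary_funpow_componentwise[OF f congr[OF Suc.prems]])
  moreover have "koszul_boundary l u p (\<lambda>S. (?F ^^ q) (?G c) S - (?G ^^ q) (?G c) S)"
    by (rule Suc.IH[OF koszul_cycle_componentwise[OF g Suc.prems]])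
  ultimately have "koszul_boundary l u p (\<lambda>S. ((?F ^^ q) (?F c) S - (?F ^^ q) (?G c) S) +
      ((?F ^^ q) (?G c) S - (?G ^^ q) (?G c) S))"
    unfolding componentwise_funpow_diff[OF koszul_endo_additive[OF f]] by (rule koszul_boundary_add)
  moreover have "(\<lambda>S. (?F ^^ Suc q) c S - (?G ^^ Suc q) c S) =
      (\<lambda>S. ((?F ^^ q) (?F c) S - (?F ^^ q) (?G c) S) +
        ((?F ^^ q) (?G c) S - (?G ^^ q) (?G c) S))"
    unfolding funpow_Suc_right comp_def by simp
  ultimately show ?case by simp
qed

end

locale koszul_pair = koszul_complex l u
  for l :: nat and u :: "nat \<Rightarrow> 'v::ab_group_add \<Rightarrow> 'v" +
  fixes w :: "nat \<Rightarrow> 'v \<Rightarrow> 'v"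
  assumes additive_w: "j < l \<Longrightarrow> additive (w j)"
    and u_w_commute: "i < l \<Longrightarrow> j < l \<Longrightarrow> i \<noteq> j \<Longrightarrow> u i (w j v) = w j (u i v)"
begin

lemma koszul_homotopy_zero: "koszul_homotopy l w (\<lambda>S. 0) = (\<lambda>T. 0)"
  by (rule ext)
    (auto simp: koszul_homotopy_def signed_def additive.zero[OF additive_w] intro!: sum.neutral)

lemma koszul_diff_homotopy_expand:
  assumes T: "T \<subseteq> {..<l}"
  shows "koszul_diff l u (koszul_homotopy l w c) T =
    (\<Sum>i\<in>{..<l} - T. u i (w i (c T))) +
    (\<Sum>i\<in>{..<l} - T. \<Sum>j\<in>T. signed (koszul_sign T i = koszul_sign (insert i T) j)
                                      (u i (w j (c (insert i (T - {j}))))))"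
proof -
  have fT: "finite T" using T finite_subset by blast
  have "koszul_diff l u (koszul_homotopy l w c) T =
      (\<Sum>i\<in>{..<l} - T. signed (koszul_sign T i) (u i (koszul_homotopy l w c (insert i T))))"
    using T by (simp add: koszul_diff_eq)
  also have "\<dots> = (\<Sum>i\<in>{..<l} - T. u i (w i (c T)) +
      (\<Sum>j\<in>T. signed (koszul_sign T i = koszul_sign (insert i T) j)
                       (u i (w j (c (insert i (T - {j})))))))"
  proof (rule sum.cong)
    fix i assume "i \<in> {..<l} - T"
    then have i: "i < l" "i \<notin> T" by auto
    have "insert i T - {j} = insert i (T - {j})" if "j \<in> T" for j using that i by auto
    then have "koszul_homotopy l w c (insert i T) = signed (koszul_sign T i) (w i (c T)) +
        (\<Sum>j\<in>T. signed (koszul_sign (insert i T) j) (w j (c (insert i (T - {j})))))"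
      using T i fT by (simp add: koszul_homotopy_def koszul_sign_insert_self insert_Diff_if)
    moreover have "j \<in> T \<Longrightarrow> j < l" for j using T by auto
    ultimately show "signed (koszul_sign T i) (u i (koszul_homotopy l w c (insert i T))) =
        u i (w i (c T)) + (\<Sum>j\<in>T. signed (koszul_sign T i = koszul_sign (insert i T) j)
                                       (u i (w j (c (insert i (T - {j}))))))"
      using i by (simp add: additive.add[OF additive_u] additive.sum[OF additive_u]
          additive_signed[OF additive_u] signed_add signed_sum signed_signed)
  qed simp
  finally show ?thesis by (simp add: sum.distrib)
qed

lemma koszul_homotopy_diff_expand:
  assumes T: "T \<subseteq> {..<l}"
  shows "koszul_homotopy l w (koszul_diff l u c) T =
    (\<Sum>j\<in>T. w j (u j (c T))) +
    (\<Sum>j\<in>T. \<Sum>i\<in>{..<l} - T. signed (koszul_sign T j = koszul_sign (T - {j}) i)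
                                      (w j (u i (c (insert i (T - {j}))))))"
proof -
  have "koszul_homotopy l w (koszul_diff l u c) T =
      (\<Sum>j\<in>T. signed (koszul_sign T j) (w j (koszul_diff l u c (T - {j}))))"
    using T by (simp add: koszul_homotopy_def)
  also have "\<dots> = (\<Sum>j\<in>T. w j (u j (c T)) +
      (\<Sum>i\<in>{..<l} - T. signed (koszul_sign T j = koszul_sign (T - {j}) i)
                                (w j (u i (c (insert i (T - {j})))))))"
  proof (rule sum.cong)
    fix j assume j: "j \<in> T"
    then have jl: "j < l" using T by auto
    have "{..<l} - (T - {j}) = insert j ({..<l} - T)" using j T by auto
    then have "koszul_diff l u c (T - {j}) = signed (koszul_sign T j) (u j (c T)) +
        (\<Sum>i\<in>{..<l} - T. signed (koszul_sign (T - {j}) i) (u i (c (insert i (T - {j})))))"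
      using T j by (auto simp: koszul_diff_eq koszul_sign_remove_self insert_absorb)
    moreover have "i \<in> {..<l} - T \<Longrightarrow> i < l" for i by auto
    ultimately show "signed (koszul_sign T j) (w j (koszul_diff l u c (T - {j}))) =
        w j (u j (c T)) + (\<Sum>i\<in>{..<l} - T. signed (koszul_sign T j = koszul_sign (T - {j}) i)
                                                (w j (u i (c (insert i (T - {j}))))))"
      using jl by (simp add: additive.add[OF additive_w] additive.sum[OF additive_w]
          additive_signed[OF additive_w] signed_add signed_sum signed_signed)
  qed simp
  finally show ?thesis by (simp add: sum.distrib)
qed

lemma koszul_homotopy_formula:
  assumes T: "T \<subseteq> {..<l}"
  shows "koszul_diff l u (koszul_homotopy l w c) T + koszul_homotopy l w (koszul_diff l u c) T =
    (\<Sum>i\<in>{..<l} - T. u i (w i (c T))) + (\<Sum>j\<in>T. w j (u j (c T)))"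
proof -
  have fT: "finite T" using T finite_subset by blast
  \<comment> \<open>the mixed terms cancel in pairs: moving j past i flips exactly one of the two signs\<close>
  have "signed (koszul_sign T i = koszul_sign (insert i T) j) (u i (w j (c (insert i (T - {j}))))) +
        signed (koszul_sign T j = koszul_sign (T - {j}) i) (w j (u i (c (insert i (T - {j}))))) = 0"
    if i: "i \<in> {..<l} - T" and j: "j \<in> T" for i j
  proof -
    have "i < l" "j < l" "i \<noteq> j" "i \<notin> T" using i j T by auto
    moreover have "(koszul_sign T i = koszul_sign (insert i T) j) \<longleftrightarrow>
        \<not> (koszul_sign T j = koszul_sign (T - {j}) i)"
      unfolding koszul_sign_remove[OF fT j, of i] koszul_sign_insert[OF fT \<open>i \<notin> T\<close>, of j]
      using \<open>i \<noteq> j\<close>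
      by (cases "i < j"; cases "koszul_sign T j"; cases "koszul_sign (T - {j}) i") simp_all
    ultimately show ?thesis by (auto simp: u_w_commute signed_def)
  qed
  then have "(\<Sum>i\<in>{..<l} - T. \<Sum>j\<in>T.
        signed (koszul_sign T i = koszul_sign (insert i T) j) (u i (w j (c (insert i (T - {j})))))) +
      (\<Sum>j\<in>T. \<Sum>i\<in>{..<l} - T.
        signed (koszul_sign T j = koszul_sign (T - {j}) i) (w j (u i (c (insert i (T - {j})))))) = 0"
    by (simp add: sum.swap[where A = T] sum.distrib[symmetric])
  then show ?thesis
    unfolding koszul_diff_homotopy_expand[OF T] koszul_homotopy_diff_expand[OF T]
    by (simp add: algebra_simps)
qed

end

section \<open>Modules over the Weyl algebra\<close>

locale weyl_algebra_module =
  fixes scale :: "'k::field_char_0 \<Rightarrow> 'v::ab_group_add \<Rightarrow> 'v"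
    and n :: nat and X D :: "nat \<Rightarrow> 'v \<Rightarrow> 'v"
  assumes weyl: "weyl_module scale n X D"
begin

sublocale vs: vector_space scale
  using weyl by (simp add: weyl_module_def)

lemma X_hom: "i \<in> {1..n} \<Longrightarrow> module_hom scale scale (X i)"
  and D_hom: "i \<in> {1..n} \<Longrightarrow> module_hom scale scale (D i)"
  using weyl by (simp_all add: weyl_module_def module_hom_iff_linear)

lemmas X_linear = module_hom.zero[OF X_hom] module_hom.add[OF X_hom] module_hom.diff[OF X_hom]
  module_hom.scale[OF X_hom] module_hom.sum[OF X_hom]
lemmas D_linear = module_hom.zero[OF D_hom] module_hom.add[OF D_hom] module_hom.diff[OF D_hom]
  module_hom.scale[OF D_hom] module_hom.sum[OF D_hom]

lemma X_commute: "i \<in> {1..n} \<Longrightarrow> j \<in> {1..n} \<Longrightarrow> X i (X j v) = X j (X i v)"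
  and D_commute: "i \<in> {1..n} \<Longrightarrow> j \<in> {1..n} \<Longrightarrow> D i (D j v) = D j (D i v)"
  using weyl by (simp_all add: weyl_module_def)

lemma D_X_commutator:
  "i \<in> {1..n} \<Longrightarrow> j \<in> {1..n} \<Longrightarrow> D i (X j v) = X j (D i v) + (if i = j then v else 0)"
proof -
  assume "i \<in> {1..n}" "j \<in> {1..n}"
  then have "D i (X j v) - X j (D i v) = (if i = j then v else 0)"
    using weyl by (simp add: weyl_module_def)
  then show ?thesis by (simp add: algebra_simps)
qed

lemma additive_euler: "m \<le> n \<Longrightarrow> additive (euler X D m)"
  by (simp add: additive_def euler_def X_linear D_linear sum.distrib)

lemma euler_X:
  assumes "m \<le> n" "j \<in> {1..n}"
  shows "euler X D m (X j v) = X j (euler X D m v) + (if j \<le> m then X j v else 0)"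
proof -
  have "euler X D m (X j v) = (\<Sum>i=1..m. X j (X i (D i v)) + (if i = j then X i v else 0))"
    unfolding euler_def
    by (rule sum.cong) (use assms in \<open>auto simp: D_X_commutator X_linear X_commute\<close>)
  then show ?thesis
    using assms by (simp add: sum.distrib euler_def X_linear sum.delta)
qed

lemma euler_D:
  assumes "m \<le> n" "j \<in> {1..n}"
  shows "euler X D m (D j v) = D j (euler X D m v) - (if j \<le> m then D j v else 0)"
proof -
  have "euler X D m (D j v) = (\<Sum>i=1..m. D j (X i (D i v)) - (if i = j then D i v else 0))"
    unfolding euler_def
  proof (rule sum.cong)
    fix i assume "i \<in> {1..m}"
    then have i: "i \<in> {1..n}" using assms by auto
    show "X i (D i (D j v)) = D j (X i (D i v)) - (if i = j then D i v else 0)"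
      using D_commute[OF i assms(2)] D_X_commutator[OF assms(2) i, of "D i v"] by auto
  qed simp
  then show ?thesis
    using assms by (simp add: sum_subtractf euler_def D_linear sum.delta)
qed

definition euler_minus :: "nat \<Rightarrow> 'k \<Rightarrow> 'v \<Rightarrow> 'v" where
  "euler_minus m \<mu> v = euler X D m v - scale \<mu> v"

lemma additive_euler_minus: "m \<le> n \<Longrightarrow> additive (euler_minus m \<mu>)"
  using additive_euler by (simp add: additive_def euler_minus_def vs.scale_right_distrib)

end

section \<open>Koszul homology of generalized Eulerian modules\<close>

text \<open>The i-th Koszul operator is X (k i) if t i and D (k i) otherwise; swapping the roles of
  X and D gives the dual operators used for the homotopy.\<close>

definition weyl_gen :: "(nat \<Rightarrow> 'v \<Rightarrow> 'v) \<Rightarrow> (nat \<Rightarrow> 'v \<Rightarrow> 'v) \<Rightarrow> (nat \<Rightarrow> nat) \<Rightarrow> (nat \<Rightarrow> bool) \<Rightarrow>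
    nat \<Rightarrow> 'v \<Rightarrow> 'v" where
  "weyl_gen X D k t = (\<lambda>i. if t i then X (k i) else D (k i))"

definition gen_degree :: "(nat \<Rightarrow> bool) \<Rightarrow> nat \<Rightarrow> int" where
  "gen_degree t = (\<lambda>i. if t i then 1 else -1)"

locale weyl_koszul = weyl_algebra_module scale n X D
  for scale :: "'k::field_char_0 \<Rightarrow> 'v::ab_group_add \<Rightarrow> 'v"
    and n :: nat and X D :: "nat \<Rightarrow> 'v \<Rightarrow> 'v" +
  fixes l :: nat and k :: "nat \<Rightarrow> nat" and t :: "nat \<Rightarrow> bool"
  assumes k_range: "i < l \<Longrightarrow> k i \<in> {1..n}" and k_inj: "inj_on k {..<l}"
begin

abbreviation "u \<equiv> weyl_gen X D k t"
abbreviation "w \<equiv> weyl_gen D X k t"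

lemma u_hom: "i < l \<Longrightarrow> module_hom scale scale (u i)"
  and w_hom: "i < l \<Longrightarrow> module_hom scale scale (w i)"
  using k_range X_hom D_hom by (simp_all add: weyl_gen_def)

sublocale koszul_pair l u w
proof unfold_locales
  fix i j v assume "i < l" "j < l" "i \<noteq> j"
  moreover then have "k i \<noteq> k j" using k_inj by (auto dest: inj_onD)
  ultimately show "u i (w j v) = w j (u i v)"
    using k_range by (simp add: weyl_gen_def X_commute D_commute D_X_commutator)
qed (simp_all add: module_hom.add[OF u_hom] module_hom.add[OF w_hom])

lemma u_w_diagonal: "i < l \<Longrightarrow> u i (w i v) = X (k i) (D (k i) v) + (if t i then 0 else v)"
  and w_u_diagonal: "i < l \<Longrightarrow> w i (u i v) = X (k i) (D (k i) v) + (if t i then v else 0)"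
  using k_range by (simp_all add: weyl_gen_def D_X_commutator)

text \<open>The number of \<partial>'s among the Koszul operators; the twist in the theorem is -theta.\<close>

definition theta :: int where
  "theta = int (card {i\<in>{..<l}. \<not> t i})"

definition euler_k :: "'v \<Rightarrow> 'v" where
  "euler_k v = (\<Sum>i<l. X (k i) (D (k i) v))"

lemma homotopy_diagonal_sum:
  assumes T: "T \<subseteq> {..<l}"
  shows "(\<Sum>i\<in>{..<l} - T. u i (w i v)) + (\<Sum>j\<in>T. w j (u j v)) =
    euler_k v + scale (of_int (theta + (\<Sum>i\<in>T. gen_degree t i))) v"
proof -
  define e where "e i = (if i \<in> T then of_bool (t i) else of_bool (\<not> t i) :: int)" for i
  have "(\<Sum>i\<in>{..<l} - T. u i (w i v)) + (\<Sum>j\<in>T. w j (u j v)) =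
      (\<Sum>i<l. if i \<in> T then w i (u i v) else u i (w i v))"
    using T by (simp add: sum.If_cases Int_absorb1 Diff_eq add.commute)
  also have "\<dots> = (\<Sum>i<l. X (k i) (D (k i) v) + scale (of_int (e i)) v)"
    by (rule sum.cong) (auto simp: u_w_diagonal w_u_diagonal e_def)
  also have "\<dots> = euler_k v + scale (of_int (\<Sum>i<l. e i)) v"
    by (simp add: sum.distrib euler_k_def vs.scale_sum_left)
  also have "(\<Sum>i<l. e i) = theta + (\<Sum>i\<in>T. gen_degree t i)"
  proof -
    have "e i = of_bool (\<not> t i) + (if i \<in> T then gen_degree t i else 0)" for i
      by (simp add: e_def gen_degree_def)
    moreover have "(\<Sum>i<l. if i \<in> T then gen_degree t i else 0) = (\<Sum>i\<in>T. gen_degree t i)"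
      using sum.inter_restrict[of "{..<l}" "gen_degree t" T] T by (simp add: Int_absorb1)
    moreover have "{..<l} \<inter> {i. \<not> t i} = {i\<in>{..<l}. \<not> t i}" by auto
    ultimately show ?thesis by (simp add: sum.distrib theta_def)
  qed
  finally show ?thesis .
qed

lemma koszul_diff_homotopy_cycle:
  assumes "koszul_cycle l u p c"
  shows "koszul_diff l u (koszul_homotopy l w c) T =
    euler_k (c T) + scale (of_int (theta + (\<Sum>i\<in>T. gen_degree t i))) (c T)"
proof (cases "T \<subseteq> {..<l}")
  case True
  have "koszul_homotopy l w (koszul_diff l u c) = (\<lambda>T. 0)"
    using assms by (simp add: koszul_cycle_def koszul_homotopy_zero)
  then show ?thesis
    using koszul_homotopy_formula[OF True, of c] homotopy_diagonal_sum[OF True] by simp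
next
  case False
  then have "c T = 0" using assms koszul_chains_vanish unfolding koszul_cycle_def by blast
  moreover have "euler_k 0 = 0"
    unfolding euler_k_def
    by (intro sum.neutral ballI) (metis k_range lessThan_iff X_linear(1) D_linear(1))
  ultimately show ?thesis
    using False by (simp add: koszul_diff_eq)
qed

lemma euler_weyl_gen:
  assumes "m \<le> n" "i < l"
  shows "euler X D m (u i v) =
    u i (euler X D m v) + (if k i \<le> m then scale (of_int (gen_degree t i)) (u i v) else 0)"
  using euler_X[OF assms(1) k_range[OF assms(2)]] euler_D[OF assms(1) k_range[OF assms(2)]]
  by (simp add: weyl_gen_def gen_degree_def)

lemma koszul_endo_euler_minus_degree:
  "koszul_endo l u (\<lambda>S. euler_minus n (of_int (d - (\<Sum>i\<in>S. gen_degree t i))))"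
  unfolding koszul_endo_def
proof (intro conjI allI impI)
  fix T i v assume T: "T \<subseteq> {..<l}" and i: "i < l" "i \<notin> T"
  define \<mu> :: 'k where "\<mu> = of_int (d - (\<Sum>j\<in>T. gen_degree t j))"
  define g :: 'k where "g = of_int (gen_degree t i)"
  have "finite T" using T finite_subset by blast
  then have "of_int (d - (\<Sum>j\<in>insert i T. gen_degree t j)) = \<mu> - g"
    using i by (simp add: \<mu>_def g_def)
  moreover have "euler X D n (u i v) = u i (euler X D n v) + scale g (u i v)"
    using euler_weyl_gen[OF order_refl i(1), of v] k_range[OF i(1)] by (simp add: g_def)
  ultimately show "u i (euler_minus n (of_int (d - (\<Sum>j\<in>insert i T. gen_degree t j))) v) =
      euler_minus n \<mu> (u i v)"
    using module_hom.diff[OF u_hom[OF i(1)]] module_hom.scale[OF u_hom[OF i(1)]]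
    by (simp add: euler_minus_def vs.scale_left_diff_distrib)
qed (simp add: additive_euler_minus)

lemma koszul_endo_euler_minus:
  assumes "m \<le> n" "\<And>i. i < l \<Longrightarrow> m < k i"
  shows "koszul_endo l u (\<lambda>S. euler_minus m \<mu>)"
  unfolding koszul_endo_def
proof (intro conjI allI impI)
  fix T i v assume "i < l"
  then show "u i (euler_minus m \<mu> v) = euler_minus m \<mu> (u i v)"
    using euler_weyl_gen[OF assms(1), of i v] assms(2)[of i] module_hom.diff[OF u_hom]
      module_hom.scale[OF u_hom]
    by (simp add: euler_minus_def)
qed (simp add: additive_euler_minus assms(1))

lemma koszul_endo_scale: "koszul_endo l u (\<lambda>S. scale x)"
  unfolding koszul_endo_def using module_hom.scale[OF u_hom]
  by (simp add: additive_def vs.scale_right_distrib)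

lemma homogeneous_chain_euler_nilpotent:
  assumes "gen_eulerian scale n X D G" "c \<in> koszul_chains l p" "koszul_homog G (gen_degree t) d c"
  shows "\<exists>a\<ge>1.
    (componentwise (\<lambda>S. euler_minus n (of_int (d - (\<Sum>i\<in>S. gen_degree t i)))) ^^ a) c = (\<lambda>S. 0)"
proof (rule componentwise_nilpotent)
  show "finite (Pow {..<l})" by simp
  show "c S = 0" if "S \<notin> Pow {..<l}" for S
    using that koszul_chains_vanish[OF assms(2)] by blast
  show "\<exists>a. (euler_minus n (of_int (d - (\<Sum>i\<in>S. gen_degree t i))) ^^ a) (c S) = 0" for S
    using assms(1,3) unfolding gen_eulerian_def koszul_homog_def euler_minus_def by blast
qed (simp add: additive.zero[OF additive_euler_minus])

lemma koszul_cycle_euler_minus_homologous: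
  assumes split: "\<And>v. euler X D n v = euler X D m v + euler_k v" and c: "koszul_cycle l u p c"
  shows "koszul_boundary l u p (\<lambda>S. euler_minus m (of_int (d + theta)) (c S) -
    euler_minus n (of_int (d - (\<Sum>i\<in>S. gen_degree t i))) (c S))"
proof -
  have "euler_minus m (of_int (d + theta)) (c S) -
      euler_minus n (of_int (d - (\<Sum>i\<in>S. gen_degree t i))) (c S) =
      - koszul_diff l u (koszul_homotopy l w c) S" for S
  proof -
    have "scale (of_int (d + theta)) (c S) - scale (of_int (d - (\<Sum>i\<in>S. gen_degree t i))) (c S) =
        scale (of_int (theta + (\<Sum>i\<in>S. gen_degree t i))) (c S)"
      by (simp flip: vs.scale_left_diff_distrib)
    then show ?thesis
      unfolding koszul_diff_homotopy_cycle[OF c] euler_minus_def split by (simp add: algebra_simps)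
  qed
  moreover have "koszul_boundary l u p (koszul_diff l u (koszul_homotopy l w c))"
    using c additive.zero[OF additive_w]
    by (auto simp: koszul_boundary_def koszul_cycle_def intro: koszul_homotopy_in_chains)
  ultimately show ?thesis using koszul_boundary_uminus by simp
qed

lemma koszul_cycle_euler_minus_boundary:
  assumes ge: "gen_eulerian scale n X D G" and m: "m \<le> n" "\<And>i. i < l \<Longrightarrow> m < k i"
    and split: "\<And>v. euler X D n v = euler X D m v + euler_k v"
    and c: "koszul_cycle l u p c" "koszul_homog G (gen_degree t) d c"
  shows "\<exists>a\<ge>1. koszul_boundary l u p
    ((componentwise (\<lambda>S. euler_minus m (of_int (d + theta))) ^^ a) c)"
proof -
  define f where "f = (\<lambda>S::nat set. euler_minus m (of_int (d + theta)))"
  define g where "g = (\<lambda>S. euler_minus n (of_int (d - (\<Sum>i\<in>S. gen_degree t i))))"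
  have f: "koszul_endo l u f" unfolding f_def using m by (rule koszul_endo_euler_minus)
  have g: "koszul_endo l u g" unfolding g_def by (rule koszul_endo_euler_minus_degree)
  have congr: "koszul_boundary l u p (\<lambda>S. componentwise f c' S - componentwise g c' S)"
    if "koszul_cycle l u p c'" for c'
    using koszul_cycle_euler_minus_homologous[OF split that]
    by (simp add: componentwise_def f_def g_def)
  obtain a where a: "a \<ge> 1" "(componentwise g ^^ a) c = (\<lambda>S. 0)"
    using homogeneous_chain_euler_nilpotent[OF ge _ c(2)] c(1)
    unfolding g_def koszul_cycle_def by blast
  have "koszul_boundary l u p (\<lambda>S. (componentwise f ^^ a) c S - (componentwise g ^^ a) c S)"
    using koszul_boundary_funpow_diff[OF f g congr c(1)] .
  then have "koszul_boundary l u p ((componentwise f ^^ a) c)" using a(2) by simp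
  then show ?thesis using a(1) unfolding f_def by blast
qed

lemma koszul_coh_gen_eulerian_complement:
  assumes "gen_eulerian scale n X D G" "m \<le> n" "\<And>i. i < l \<Longrightarrow> m < k i"
    and "\<And>v. euler X D n v = euler X D m v + euler_k v"
  shows "koszul_coh_gen_eulerian scale m X D G l u (gen_degree t) \<nu> (- theta)"
  unfolding koszul_coh_gen_eulerian_def
proof (intro allI impI)
  fix d c assume c: "koszul_cycle l u (int l - int \<nu>) c \<and> koszul_homog G (gen_degree t) d c"
  have "componentwise (\<lambda>S. euler_minus m (of_int (d + theta))) =
      (\<lambda>c S. euler X D m (c S) - scale (of_int (d - - theta)) (c S))"
    by (simp add: fun_eq_iff componentwise_def euler_minus_def)
  then show "\<exists>a\<ge>1. koszul_boundary l u (int l - int \<nu>)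
      (((\<lambda>c S. euler X D m (c S) - scale (of_int (d - - theta)) (c S)) ^^ a) c)"
    using koszul_cycle_euler_minus_boundary[OF assms conjunct1[OF c] conjunct2[OF c]] by simp
qed

lemma koszul_coh_concentrated_total:
  assumes ge: "gen_eulerian scale n X D G" and total: "\<And>v. euler X D n v = euler_k v"
  shows "koszul_coh_concentrated G l u (gen_degree t) \<nu> (- theta)"
  unfolding koszul_coh_concentrated_def
proof (intro allI impI)
  fix d c
  assume c: "koszul_cycle l u (int l - int \<nu>) c \<and> koszul_homog G (gen_degree t) d c \<and>
    d \<noteq> - theta"
  define \<mu> :: 'k where "\<mu> = of_int (d + theta)"
  have "d + theta \<noteq> 0" using c by linarith
  then have "\<mu> \<noteq> 0" unfolding \<mu>_def by (simp only: of_int_eq_0_iff) simp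
  \<comment> \<open>apply the previous lemma with m = 0, where E_0 - \<mu> is the scalar -\<mu>\<close>
  have "euler X D n v = euler X D 0 v + euler_k v" for v using total by (simp add: euler_def)
  moreover have "0 < k i" if "i < l" for i using k_range[OF that] by simp
  ultimately have "\<exists>a\<ge>1. koszul_boundary l u (int l - int \<nu>)
      ((componentwise (\<lambda>S. euler_minus 0 \<mu>) ^^ a) c)"
    using koszul_cycle_euler_minus_boundary[OF ge le0] c unfolding \<mu>_def by blast
  then obtain a where
    "koszul_boundary l u (int l - int \<nu>) ((componentwise (\<lambda>S. euler_minus 0 \<mu>) ^^ a) c)"
    by blast
  moreover have "(euler_minus 0 \<mu> ^^ a) v = scale ((- \<mu>) ^ a) v" for v
    by (induction a) (simp_all add: euler_minus_def euler_def vs.scale_scale)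
  ultimately have "koszul_boundary l u (int l - int \<nu>) (componentwise (\<lambda>S. scale ((- \<mu>) ^ a)) c)"
    by (simp add: componentwise_funpow componentwise_def)
  then have "koszul_boundary l u (int l - int \<nu>)
      (componentwise (\<lambda>S. scale (inverse ((- \<mu>) ^ a))) (componentwise (\<lambda>S. scale ((- \<mu>) ^ a)) c))"
    by (rule koszul_boundary_componentwise[OF koszul_endo_scale])
  then show "koszul_boundary l u (int l - int \<nu>) c"
    using \<open>\<mu> \<noteq> 0\<close> by (simp add: componentwise_def vs.scale_scale)
qed

end

lemma sum_atLeastAtMost_split_shift:
  fixes f :: "nat \<Rightarrow> 'a::comm_monoid_add"
  assumes "1 \<le> r" "r \<le> n"
  shows "(\<Sum>i=1..n. f i) = (\<Sum>i=1..r-1. f i) + (\<Sum>i<n-r+1. f (r + i))"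
proof -
  have "(\<Sum>i<n-r+1. f (r + i)) = (\<Sum>i=r..n. f i)"
    by (rule sum.reindex_bij_witness[of _ "\<lambda>j. j - r" "\<lambda>i. r + i"]) (use assms in auto)
  moreover have "{1..n} = {1..r-1} \<union> {r..n}" using assms by auto
  ultimately show ?thesis by (simp add: sum.union_disjoint)
qed

theorem theorem1p4:
  fixes scale :: "'k::field_char_0 \<Rightarrow> 'v::ab_group_add \<Rightarrow> 'v"
    and n r :: nat and X D :: "nat \<Rightarrow> 'v \<Rightarrow> 'v" and G :: "int \<Rightarrow> 'v set"
  assumes "graded_weyl_module scale n X D G"
    and "gen_eulerian scale n X D G"
    and "1 \<le> r" and "r \<le> n"
  shows "(\<forall>\<nu>. koszul_coh_gen_eulerian scale (r - 1) X D G (n - r + 1)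
                 (\<lambda>i. D (r + i)) (\<lambda>i. -1) \<nu> (- int n + int r - 1)) \<and>
         (\<forall>\<nu>. koszul_coh_gen_eulerian scale (r - 1) X D G (n - r + 1)
                 (\<lambda>i. X (r + i)) (\<lambda>i. 1) \<nu> 0) \<and>
         (\<forall>\<nu>. koszul_coh_concentrated G n
                 (\<lambda>i. if i < r - 1 then X (i + 1) else D (i + 1))
                 (\<lambda>i. if i < r - 1 then 1 else -1) \<nu> (- int n + int r - 1))"
proof -
  have weyl: "weyl_module scale n X D" using assms(1) by (simp add: graded_weyl_module_def)
  interpret weyl_algebra_module scale n X D by (rule weyl_algebra_module.intro[OF weyl])
  interpret K1: weyl_koszul scale n X D "n - r + 1" "\<lambda>i. r + i" "\<lambda>i. False"
    by unfold_locales (use assms(3,4) in \<open>auto simp: inj_on_def\<close>)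
  interpret K2: weyl_koszul scale n X D "n - r + 1" "\<lambda>i. r + i" "\<lambda>i. True"
    by unfold_locales (use assms(3,4) in \<open>auto simp: inj_on_def\<close>)
  interpret K3: weyl_koszul scale n X D n "\<lambda>i. i + 1" "\<lambda>i. i < r - 1"
    by unfold_locales (auto simp: inj_on_def)
  have split:
    "euler X D n v = euler X D (r - 1) v + (\<Sum>i<n - r + 1. X (r + i) (D (r + i) v))" for v
    unfolding euler_def using assms(3,4) by (rule sum_atLeastAtMost_split_shift)
  have total: "euler X D n v = (\<Sum>i<n. X (i + 1) (D (i + 1) v))" for v
    unfolding euler_def by (simp add: sum.atLeast1_atMost_eq)
  have "{i\<in>{..<n}. \<not> i < r - 1} = {r - 1..<n}" by auto
  then have theta:
    "K1.theta = int n - int r + 1" "K2.theta = 0" "K3.theta = int n - int r + 1"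
    unfolding K1.theta_def K2.theta_def K3.theta_def using assms(3,4) by simp_all
  show ?thesis
    using K1.koszul_coh_gen_eulerian_complement[OF assms(2) _ _ split[folded K1.euler_k_def]]
      K2.koszul_coh_gen_eulerian_complement[OF assms(2) _ _ split[folded K2.euler_k_def]]
      K3.koszul_coh_concentrated_total[OF assms(2) total[folded K3.euler_k_def]]
      assms(3,4) unfolding theta
    by (simp add: weyl_gen_def gen_degree_def del: One_nat_def)
qed

end
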